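(* Let $(L,b)$ and $(M,b)$ be cochain complexes of vector spaces, and let $i:(L,b)\to(M,b)$, $p:(M,b)\to(L,b)$ be quasi-isomorphisms (cochain maps inducing isomorphisms in cohomology) with $ip=1$. Let $\delta:M\to M$ be a linear map of degree $+1$ with $(b+\delta)^2=0$. Then $(b+p\delta i)^2=0$ on $L$, and $i:(L,b+p\delta i)\to(M,b+\delta)$ and $p:(M,b+\delta)\to(L,b+p\delta i)$ are quasi-isomorphisms (cochain maps) satisfying $ip=1$.
   Context: All maps are linear. *)

theory Defs
  imports Complex_Main
begin

text \<open>A graded vector space over a field 'k is modelled as a family of subspaces
  V n (n :: int) of an ambient vector space of type 'v with scalar multiplication sc.
  Maps between graded spaces are degree-indexed families of functions; the component
  in degree n is only required to be linear on V n.\<close>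

definition lin_on :: "('k::field \<Rightarrow> 'a::ab_group_add \<Rightarrow> 'a) \<Rightarrow> ('k \<Rightarrow> 'b::ab_group_add \<Rightarrow> 'b)
    \<Rightarrow> 'a set \<Rightarrow> 'b set \<Rightarrow> ('a \<Rightarrow> 'b) \<Rightarrow> bool" where
  "lin_on sA sB A B f \<longleftrightarrow>
     (\<forall>x\<in>A. f x \<in> B) \<and>
     (\<forall>x\<in>A. \<forall>y\<in>A. f (x + y) = f x + f y) \<and>
     (\<forall>c. \<forall>x\<in>A. f (sA c x) = sB c (f x))"

definition cochain_complex :: "('k::field \<Rightarrow> 'v::ab_group_add \<Rightarrow> 'v) \<Rightarrow> (int \<Rightarrow> 'v set)
    \<Rightarrow> (int \<Rightarrow> 'v \<Rightarrow> 'v) \<Rightarrow> bool" where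
  "cochain_complex sc V d \<longleftrightarrow>
     vector_space sc \<and>
     (\<forall>n. module.subspace sc (V n)) \<and>
     (\<forall>n. lin_on sc sc (V n) (V (n + 1)) (d n)) \<and>
     (\<forall>n. \<forall>x\<in>V n. d (n + 1) (d n x) = 0)"

definition cochain_map :: "('k::field \<Rightarrow> 'v::ab_group_add \<Rightarrow> 'v) \<Rightarrow> (int \<Rightarrow> 'v set) \<Rightarrow> (int \<Rightarrow> 'v \<Rightarrow> 'v)
    \<Rightarrow> ('k \<Rightarrow> 'w::ab_group_add \<Rightarrow> 'w) \<Rightarrow> (int \<Rightarrow> 'w set) \<Rightarrow> (int \<Rightarrow> 'w \<Rightarrow> 'w)
    \<Rightarrow> (int \<Rightarrow> 'v \<Rightarrow> 'w) \<Rightarrow> bool" where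
  "cochain_map sV V dV sW W dW f \<longleftrightarrow>
     (\<forall>n. lin_on sV sW (V n) (W n) (f n)) \<and>
     (\<forall>n. \<forall>x\<in>V n. f (n + 1) (dV n x) = dW n (f n x))"

text \<open>The map induced by a cochain map on H(n) = ker d n / im d (n-1) is bijective
  (injective and surjective on cohomology classes), written out on representatives.\<close>
definition cohom_iso :: "(int \<Rightarrow> 'v::ab_group_add set) \<Rightarrow> (int \<Rightarrow> 'v \<Rightarrow> 'v)
    \<Rightarrow> (int \<Rightarrow> 'w::ab_group_add set) \<Rightarrow> (int \<Rightarrow> 'w \<Rightarrow> 'w) \<Rightarrow> (int \<Rightarrow> 'v \<Rightarrow> 'w) \<Rightarrow> int \<Rightarrow> bool" where
  "cohom_iso V dV W dW f n \<longleftrightarrow>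
     (\<forall>x\<in>V n. dV n x = 0 \<longrightarrow> f n x \<in> dW (n - 1) ` W (n - 1) \<longrightarrow> x \<in> dV (n - 1) ` V (n - 1)) \<and>
     (\<forall>y\<in>W n. dW n y = 0 \<longrightarrow> (\<exists>x\<in>V n. dV n x = 0 \<and> y - f n x \<in> dW (n - 1) ` W (n - 1)))"

definition quasi_iso :: "('k::field \<Rightarrow> 'v::ab_group_add \<Rightarrow> 'v) \<Rightarrow> (int \<Rightarrow> 'v set) \<Rightarrow> (int \<Rightarrow> 'v \<Rightarrow> 'v)
    \<Rightarrow> ('k \<Rightarrow> 'w::ab_group_add \<Rightarrow> 'w) \<Rightarrow> (int \<Rightarrow> 'w set) \<Rightarrow> (int \<Rightarrow> 'w \<Rightarrow> 'w)
    \<Rightarrow> (int \<Rightarrow> 'v \<Rightarrow> 'w) \<Rightarrow> bool" where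
  "quasi_iso sV V dV sW W dW f \<longleftrightarrow>
     cochain_map sV V dV sW W dW f \<and> (\<forall>n. cohom_iso V dV W dW f n)"

end

theory Submission
  imports Defs
begin

text \<open>Since \<open>i p = 1\<close>, the complex \<open>L\<close> splits as \<open>p(M) \<oplus> ker i\<close>, and on \<open>ker i\<close> the perturbed
  differential \<open>b + p\<delta>i\<close> coincides with \<open>b\<close>. The identities \<open>i (b + p\<delta>i) = (b + \<delta>) i\<close> and
  \<open>p (b + \<delta>) = (b + p\<delta>i) p\<close> make \<open>i\<close> and \<open>p\<close> cochain maps for the perturbed differentials,
  and \<open>(b + p\<delta>i)\<^sup>2 = 0\<close> follows on each summand. For any pair of cochain maps with \<open>i p = 1\<close>,
  both are quasi-isomorphisms as soon as the subcomplex \<open>ker i\<close> is acyclic. For \<open>b\<close> this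
  acyclicity holds because \<open>i\<close> is injective in cohomology, and it carries over to \<open>b + p\<delta>i\<close>
  because the two differentials agree on \<open>ker i\<close>.\<close>

lemma lin_on_mem: "lin_on sA sB A B f \<Longrightarrow> x \<in> A \<Longrightarrow> f x \<in> B"
  unfolding lin_on_def by blast

lemma lin_on_add: "lin_on sA sB A B f \<Longrightarrow> x \<in> A \<Longrightarrow> y \<in> A \<Longrightarrow> f (x + y) = f x + f y"
  unfolding lin_on_def by blast

lemma lin_on_zero: "lin_on sA sB A B f \<Longrightarrow> 0 \<in> A \<Longrightarrow> f 0 = 0"
  unfolding lin_on_def by (metis add.right_neutral add_left_cancel)

lemma lin_on_diff:
  "lin_on sA sB A B f \<Longrightarrow> x \<in> A \<Longrightarrow> y \<in> A \<Longrightarrow> x - y \<in> A \<Longrightarrow> f (x - y) = f x - f y"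
  unfolding lin_on_def by (metis add_diff_cancel diff_add_cancel eq_diff_eq)

lemma lin_on_compose:
  "lin_on sA sB A B f \<Longrightarrow> lin_on sB sC B C g \<Longrightarrow> lin_on sA sC A C (\<lambda>x. g (f x))"
  unfolding lin_on_def by auto

lemma lin_on_plus:
  assumes B: "module sB" "module.subspace sB B"
    and f: "lin_on sA sB A B f" and g: "lin_on sA sB A B g"
  shows "lin_on sA sB A B (\<lambda>x. f x + g x)"
  using f g module.subspace_add[OF B] module.scale_right_distrib[OF B(1)]
  unfolding lin_on_def by (simp add: ac_simps)

lemma cochain_complex_module: "cochain_complex sc V d \<Longrightarrow> module sc"
  unfolding cochain_complex_def using module_iff_vector_space by blast

lemma cochain_complex_subspace: "cochain_complex sc V d \<Longrightarrow> module.subspace sc (V n)"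
  unfolding cochain_complex_def by blast

lemma cochain_complex_lin_on: "cochain_complex sc V d \<Longrightarrow> lin_on sc sc (V n) (V (n + 1)) (d n)"
  unfolding cochain_complex_def by blast

lemma cochain_complex_dd: "cochain_complex sc V d \<Longrightarrow> x \<in> V n \<Longrightarrow> d (n + 1) (d n x) = 0"
  unfolding cochain_complex_def by blast

lemma cochain_complex_zero_mem: "cochain_complex sc V d \<Longrightarrow> 0 \<in> V n"
  by (metis cochain_complex_module cochain_complex_subspace module.subspace_0)

lemma cochain_complex_add_mem: "cochain_complex sc V d \<Longrightarrow> x \<in> V n \<Longrightarrow> y \<in> V n \<Longrightarrow> x + y \<in> V n"
  by (metis cochain_complex_module cochain_complex_subspace module.subspace_add)

lemma cochain_complex_diff_mem: "cochain_complex sc V d \<Longrightarrow> x \<in> V n \<Longrightarrow> y \<in> V n \<Longrightarrow> x - y \<in> V n"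
  by (metis cochain_complex_module cochain_complex_subspace module.subspace_diff)

lemma cochain_complex_d_mem: "cochain_complex sc V d \<Longrightarrow> x \<in> V n \<Longrightarrow> d n x \<in> V (n + 1)"
  by (metis cochain_complex_lin_on lin_on_mem)

lemma cochain_complex_d_zero: "cochain_complex sc V d \<Longrightarrow> d n 0 = 0"
  by (metis cochain_complex_lin_on cochain_complex_zero_mem lin_on_zero)

lemma cochain_complex_d_diff:
  "cochain_complex sc V d \<Longrightarrow> x \<in> V n \<Longrightarrow> y \<in> V n \<Longrightarrow> d n (x - y) = d n x - d n y"
  by (metis cochain_complex_diff_mem cochain_complex_lin_on lin_on_diff)

lemma cochain_map_lin_on: "cochain_map sV V dV sW W dW f \<Longrightarrow> lin_on sV sW (V n) (W n) (f n)"
  unfolding cochain_map_def by blast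

lemma cochain_map_mem: "cochain_map sV V dV sW W dW f \<Longrightarrow> x \<in> V n \<Longrightarrow> f n x \<in> W n"
  by (metis cochain_map_lin_on lin_on_mem)

lemma cochain_map_commute:
  "cochain_map sV V dV sW W dW f \<Longrightarrow> x \<in> V n \<Longrightarrow> f (n + 1) (dV n x) = dW n (f n x)"
  unfolding cochain_map_def by blast

lemma cochain_map_add:
  "cochain_map sV V dV sW W dW f \<Longrightarrow> x \<in> V n \<Longrightarrow> y \<in> V n \<Longrightarrow> f n (x + y) = f n x + f n y"
  unfolding cochain_map_def by (metis lin_on_add)

lemma cochain_map_zero: "cochain_complex sV V dV \<Longrightarrow> cochain_map sV V dV sW W dW f \<Longrightarrow> f n 0 = 0"
  unfolding cochain_map_def by (metis cochain_complex_zero_mem lin_on_zero)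

lemma cochain_map_diff:
  "cochain_complex sV V dV \<Longrightarrow> cochain_map sV V dV sW W dW f \<Longrightarrow> x \<in> V n \<Longrightarrow> y \<in> V n
    \<Longrightarrow> f n (x - y) = f n x - f n y"
  unfolding cochain_map_def by (metis cochain_complex_diff_mem lin_on_diff)

definition kernel_acyclic :: "(int \<Rightarrow> 'v::ab_group_add set) \<Rightarrow> (int \<Rightarrow> 'v \<Rightarrow> 'v)
    \<Rightarrow> (int \<Rightarrow> 'v \<Rightarrow> 'w::zero) \<Rightarrow> int \<Rightarrow> bool" where
  "kernel_acyclic V d f n \<longleftrightarrow>
     (\<forall>z\<in>V n. f n z = 0 \<longrightarrow> d n z = 0 \<longrightarrow> (\<exists>w\<in>V (n - 1). f (n - 1) w = 0 \<and> d (n - 1) w = z))"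

lemma kernel_acyclicE:
  assumes "kernel_acyclic V d f n" "z \<in> V n" "f n z = 0" "d n z = 0"
  obtains w where "w \<in> V (n - 1)" "f (n - 1) w = 0" "d (n - 1) w = z"
  using assms unfolding kernel_acyclic_def by blast

lemma quasi_iso_kernel_acyclic:
  assumes cV: "cochain_complex sV V dV" and cW: "cochain_complex sW W dW"
    and f: "quasi_iso sV V dV sW W dW f" and g: "cochain_map sW W dW sV V dV g"
    and fg: "\<forall>n. \<forall>y\<in>W n. f n (g n y) = y"
  shows "kernel_acyclic V dV f n"
  unfolding kernel_acyclic_def
proof (intro ballI impI)
  let ?m = "n - 1"
  have f_map: "cochain_map sV V dV sW W dW f" using f unfolding quasi_iso_def by blast
  fix z assume z: "z \<in> V n" and fz: "f n z = 0" and dz: "dV n z = 0"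
  have "f n z \<in> dW ?m ` W ?m"
    using fz cochain_complex_zero_mem[OF cW] cochain_complex_d_zero[OF cW] by (metis image_eqI)
  then obtain w where w: "w \<in> V ?m" and zw: "z = dV ?m w"
    using f z dz unfolding quasi_iso_def cohom_iso_def by blast
  have fw: "f ?m w \<in> W ?m" using cochain_map_mem[OF f_map w] .
  have gfw: "g ?m (f ?m w) \<in> V ?m" using cochain_map_mem[OF g fw] .
  \<comment> \<open>Subtracting \<open>g (f w)\<close>, a cocycle because \<open>f z = 0\<close>, moves the primitive into \<open>ker f\<close>.\<close>
  define w' where "w' = w - g ?m (f ?m w)"
  have w': "w' \<in> V ?m" unfolding w'_def using cochain_complex_diff_mem[OF cV w gfw] .
  have "f ?m w' = 0"
    unfolding w'_def using cochain_map_diff[OF cV f_map w gfw] fg fw by simp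
  moreover have "dV ?m (g ?m (f ?m w)) = 0"
  proof -
    have "dV ?m (g ?m (f ?m w)) = g n (dW ?m (f ?m w))"
      using cochain_map_commute[OF g fw] by simp
    also have "\<dots> = g n (f n z)" using cochain_map_commute[OF f_map w] zw by simp
    finally show ?thesis using fz cochain_map_zero[OF cW g] by simp
  qed
  then have "dV ?m w' = z" unfolding w'_def using cochain_complex_d_diff[OF cV w gfw] zw by simp
  ultimately show "\<exists>w\<in>V ?m. f ?m w = 0 \<and> dV ?m w = z" using w' by blast
qed

lemma cohom_iso_retraction:
  assumes cV: "cochain_complex sV V dV" and cW: "cochain_complex sW W dW"
    and f: "cochain_map sV V dV sW W dW f" and g: "cochain_map sW W dW sV V dV g"
    and fg: "\<forall>n. \<forall>y\<in>W n. f n (g n y) = y" and acyclic: "kernel_acyclic V dV f n"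
  shows "cohom_iso V dV W dW f n"
  unfolding cohom_iso_def
proof (intro conjI ballI impI)
  let ?m = "n - 1"
  fix x assume x: "x \<in> V n" and dx: "dV n x = 0" and "f n x \<in> dW ?m ` W ?m"
  then obtain y where y: "y \<in> W ?m" and fx: "f n x = dW ?m y" by blast
  define x' where "x' = g ?m y"
  have x': "x' \<in> V ?m" unfolding x'_def using cochain_map_mem[OF g y] .
  have dx': "dV ?m x' \<in> V n" using cochain_complex_d_mem[OF cV x'] by simp
  have "dV ?m x' = g n (f n x)" unfolding x'_def using cochain_map_commute[OF g y] fx by simp
  then have "f n (x - dV ?m x') = 0"
    using cochain_map_diff[OF cV f x dx'] fg cochain_map_mem[OF f x] by simp
  moreover have "dV n (x - dV ?m x') = 0"
    using cochain_complex_d_diff[OF cV x dx'] cochain_complex_dd[OF cV x'] dx by simp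
  ultimately obtain w where w: "w \<in> V ?m" and "dV ?m w = x - dV ?m x'"
    using kernel_acyclicE[OF acyclic cochain_complex_diff_mem[OF cV x dx']] by blast
  then have "x = dV ?m (x' + w)"
    using lin_on_add[OF cochain_complex_lin_on[OF cV] x' w] by simp
  then show "x \<in> dV ?m ` V ?m" using cochain_complex_add_mem[OF cV x' w] by blast
next
  let ?m = "n - 1"
  fix y assume y: "y \<in> W n" and dy: "dW n y = 0"
  have "dV n (g n y) = 0"
    using cochain_map_commute[OF g y] dy cochain_map_zero[OF cW g] by simp
  moreover have "y - f n (g n y) \<in> dW ?m ` W ?m"
    using fg y cochain_complex_zero_mem[OF cW] cochain_complex_d_zero[OF cW] by (metis image_eqI diff_self)
  ultimately show "\<exists>x\<in>V n. dV n x = 0 \<and> y - f n x \<in> dW ?m ` W ?m"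
    using cochain_map_mem[OF g y] by blast
qed

lemma cohom_iso_section:
  assumes cV: "cochain_complex sV V dV" and cW: "cochain_complex sW W dW"
    and f: "cochain_map sV V dV sW W dW f" and g: "cochain_map sW W dW sV V dV g"
    and fg: "\<forall>n. \<forall>y\<in>W n. f n (g n y) = y" and acyclic: "kernel_acyclic V dV f n"
  shows "cohom_iso W dW V dV g n"
  unfolding cohom_iso_def
proof (intro conjI ballI impI)
  let ?m = "n - 1"
  fix y assume y: "y \<in> W n" and "g n y \<in> dV ?m ` V ?m"
  then obtain x where x: "x \<in> V ?m" and gy: "g n y = dV ?m x" by blast
  have "y = f n (g n y)" using fg y by simp
  also have "\<dots> = dW ?m (f ?m x)" using gy cochain_map_commute[OF f x] by simp
  finally have "y = dW ?m (f ?m x)" .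
  then show "y \<in> dW ?m ` W ?m" using cochain_map_mem[OF f x] by blast
next
  let ?m = "n - 1"
  fix x assume x: "x \<in> V n" and dx: "dV n x = 0"
  have fx: "f n x \<in> W n" using cochain_map_mem[OF f x] .
  have dfx: "dW n (f n x) = 0"
    using cochain_map_commute[OF f x] dx cochain_map_zero[OF cV f] by simp
  have gfx: "g n (f n x) \<in> V n" using cochain_map_mem[OF g fx] .
  have "f n (x - g n (f n x)) = 0" using cochain_map_diff[OF cV f x gfx] fg fx by simp
  moreover have "dV n (x - g n (f n x)) = 0"
    using cochain_complex_d_diff[OF cV x gfx] cochain_map_commute[OF g fx] dfx dx
      cochain_map_zero[OF cW g] by simp
  ultimately obtain w where "w \<in> V ?m" "dV ?m w = x - g n (f n x)"
    using kernel_acyclicE[OF acyclic cochain_complex_diff_mem[OF cV x gfx]] by blast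
  then have "x - g n (f n x) \<in> dV ?m ` V ?m" by (metis image_eqI)
  then show "\<exists>y\<in>W n. dW n y = 0 \<and> x - g n y \<in> dV ?m ` V ?m" using fx dfx by blast
qed

lemma retract_quasi_iso:
  assumes "cochain_complex sV V dV" "cochain_complex sW W dW"
    and "cochain_map sV V dV sW W dW f" "cochain_map sW W dW sV V dV g"
    and "\<forall>n. \<forall>y\<in>W n. f n (g n y) = y" "\<forall>n. kernel_acyclic V dV f n"
  shows "quasi_iso sV V dV sW W dW f \<and> quasi_iso sW W dW sV V dV g"
  using assms cohom_iso_retraction[OF assms(1-5)] cohom_iso_section[OF assms(1-5)]
  unfolding quasi_iso_def by blast

locale perturbed_retract =
  fixes sL :: "'k::field \<Rightarrow> 'l::ab_group_add \<Rightarrow> 'l" and L :: "int \<Rightarrow> 'l set"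
    and bL :: "int \<Rightarrow> 'l \<Rightarrow> 'l"
    and sM :: "'k \<Rightarrow> 'm::ab_group_add \<Rightarrow> 'm" and M :: "int \<Rightarrow> 'm set"
    and bM :: "int \<Rightarrow> 'm \<Rightarrow> 'm"
    and i :: "int \<Rightarrow> 'l \<Rightarrow> 'm" and p :: "int \<Rightarrow> 'm \<Rightarrow> 'l"
    and \<delta> :: "int \<Rightarrow> 'm \<Rightarrow> 'm"
  assumes cL: "cochain_complex sL L bL"
    and cM: "cochain_complex sM M bM"
    and i_map: "cochain_map sL L bL sM M bM i"
    and p_map: "cochain_map sM M bM sL L bL p"
    and ip: "\<forall>n. \<forall>y\<in>M n. i n (p n y) = y"
    and \<delta>_lin: "\<forall>n. lin_on sM sM (M n) (M (n + 1)) (\<delta> n)"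
    and sq: "\<forall>n. \<forall>y\<in>M n. bM (n + 1) (bM n y + \<delta> n y) + \<delta> (n + 1) (bM n y + \<delta> n y) = 0"
begin

definition DM :: "int \<Rightarrow> 'm \<Rightarrow> 'm" where
  "DM n y = bM n y + \<delta> n y"

definition DL :: "int \<Rightarrow> 'l \<Rightarrow> 'l" where
  "DL n x = bL n x + p (n + 1) (\<delta> n (i n x))"

lemma \<delta>_mem: "y \<in> M n \<Longrightarrow> \<delta> n y \<in> M (n + 1)"
  using \<delta>_lin lin_on_mem by blast

lemma \<delta>_zero: "\<delta> n 0 = 0"
  using \<delta>_lin lin_on_zero cochain_complex_zero_mem[OF cM] by blast

lemma DM_lin_on: "lin_on sM sM (M n) (M (n + 1)) (DM n)"
  unfolding DM_def[abs_def]
  using lin_on_plus cochain_complex_module[OF cM] cochain_complex_subspace[OF cM]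
    cochain_complex_lin_on[OF cM] \<delta>_lin by blast

lemma cochain_complex_DM: "cochain_complex sM M DM"
  using cM DM_lin_on sq unfolding cochain_complex_def DM_def by blast

lemma DL_lin_on: "lin_on sL sL (L n) (L (n + 1)) (DL n)"
proof -
  have "lin_on sL sL (L n) (L (n + 1)) (\<lambda>x. p (n + 1) (\<delta> n (i n x)))"
    using lin_on_compose[OF lin_on_compose[OF cochain_map_lin_on[OF i_map] \<delta>_lin[rule_format]]
        cochain_map_lin_on[OF p_map]] .
  then show ?thesis
    unfolding DL_def[abs_def]
    using lin_on_plus cochain_complex_module[OF cL] cochain_complex_subspace[OF cL]
      cochain_complex_lin_on[OF cL] by blast
qed

lemma DL_mem: "x \<in> L n \<Longrightarrow> DL n x \<in> L (n + 1)"
  using DL_lin_on lin_on_mem by blast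

lemma i_DL: "x \<in> L n \<Longrightarrow> i (n + 1) (DL n x) = DM n (i n x)"
  unfolding DL_def DM_def
  using cochain_map_add[OF i_map cochain_complex_d_mem[OF cL]
      cochain_map_mem[OF p_map \<delta>_mem[OF cochain_map_mem[OF i_map]]]]
    cochain_map_commute[OF i_map] ip \<delta>_mem cochain_map_mem[OF i_map]
  by simp

lemma p_DM: "y \<in> M n \<Longrightarrow> p (n + 1) (DM n y) = DL n (p n y)"
  unfolding DL_def DM_def
  using cochain_map_add[OF p_map cochain_complex_d_mem[OF cM] \<delta>_mem]
    cochain_map_commute[OF p_map] ip
  by simp

lemma DL_kernel: "i n x = 0 \<Longrightarrow> DL n x = bL n x"
  unfolding DL_def using \<delta>_zero cochain_map_zero[OF cM p_map] by simp

text \<open>Write \<open>x = p (i x) + z\<close> with \<open>i z = 0\<close>: on \<open>p(M)\<close> the square of \<open>DL\<close> is \<open>p DM\<^sup>2 i = 0\<close>,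
  and \<open>ker i\<close> is a subcomplex on which \<open>DL = bL\<close>.\<close>
lemma DL_DL:
  assumes x: "x \<in> L n"
  shows "DL (n + 1) (DL n x) = 0"
proof -
  let ?y = "i n x"
  have y: "?y \<in> M n" using cochain_map_mem[OF i_map x] .
  have py: "p n ?y \<in> L n" using cochain_map_mem[OF p_map y] .
  define z where "z = x - p n ?y"
  have z: "z \<in> L n" unfolding z_def using cochain_complex_diff_mem[OF cL x py] .
  have iz: "i n z = 0" unfolding z_def using cochain_map_diff[OF cL i_map x py] ip y by simp
  have "DL (n + 1) (DL n (p n ?y)) = DL (n + 1) (p (n + 1) (DM n ?y))" using p_DM[OF y] by simp
  also have "\<dots> = p (n + 1 + 1) (DM (n + 1) (DM n ?y))"
    using p_DM[OF lin_on_mem[OF DM_lin_on y]] by simp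
  also have "\<dots> = 0"
    using cochain_complex_dd[OF cochain_complex_DM y] cochain_map_zero[OF cM p_map] by simp
  finally have DL_image: "DL (n + 1) (DL n (p n ?y)) = 0" .
  have "i (n + 1) (bL n z) = 0"
    using cochain_map_commute[OF i_map z] iz cochain_complex_d_zero[OF cM] by simp
  then have DL_kernel_part: "DL (n + 1) (DL n z) = 0"
    using DL_kernel[OF iz] DL_kernel cochain_complex_dd[OF cL z] by simp
  have "x = p n ?y + z" unfolding z_def by simp
  then have "DL (n + 1) (DL n x) = DL (n + 1) (DL n (p n ?y)) + DL (n + 1) (DL n z)"
    using lin_on_add[OF DL_lin_on py z] lin_on_add[OF DL_lin_on DL_mem[OF py] DL_mem[OF z]] by simp
  then show ?thesis using DL_image DL_kernel_part by simp
qed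

lemma cochain_complex_DL: "cochain_complex sL L DL"
  using cL DL_lin_on DL_DL unfolding cochain_complex_def by blast

lemma cochain_map_i_DL: "cochain_map sL L DL sM M DM i"
  using i_map i_DL unfolding cochain_map_def by blast

lemma cochain_map_p_DM: "cochain_map sM M DM sL L DL p"
  using p_map p_DM unfolding cochain_map_def by blast

lemma kernel_acyclic_DL: "kernel_acyclic L bL i n \<Longrightarrow> kernel_acyclic L DL i n"
  unfolding kernel_acyclic_def using DL_kernel by metis

end

theorem mainTheorem4:
  fixes sL :: "'k::field \<Rightarrow> 'l::ab_group_add \<Rightarrow> 'l" and L :: "int \<Rightarrow> 'l set"
    and bL :: "int \<Rightarrow> 'l \<Rightarrow> 'l"
    and sM :: "'k \<Rightarrow> 'm::ab_group_add \<Rightarrow> 'm" and M :: "int \<Rightarrow> 'm set"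
    and bM :: "int \<Rightarrow> 'm \<Rightarrow> 'm"
    and i :: "int \<Rightarrow> 'l \<Rightarrow> 'm" and p :: "int \<Rightarrow> 'm \<Rightarrow> 'l"
    and \<delta> :: "int \<Rightarrow> 'm \<Rightarrow> 'm"
  assumes cL: "cochain_complex sL L bL"
    and cM: "cochain_complex sM M bM"
    and qi: "quasi_iso sL L bL sM M bM i"
    and qp: "quasi_iso sM M bM sL L bL p"
    and ip: "\<forall>n. \<forall>y\<in>M n. i n (p n y) = y"
    and \<delta>lin: "\<forall>n. lin_on sM sM (M n) (M (n + 1)) (\<delta> n)"
    and sq: "\<forall>n. \<forall>y\<in>M n. bM (n + 1) (bM n y + \<delta> n y) + \<delta> (n + 1) (bM n y + \<delta> n y) = 0"
  shows "cochain_complex sL L (\<lambda>n x. bL n x + p (n + 1) (\<delta> n (i n x)))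
       \<and> quasi_iso sL L (\<lambda>n x. bL n x + p (n + 1) (\<delta> n (i n x))) sM M (\<lambda>n y. bM n y + \<delta> n y) i
       \<and> quasi_iso sM M (\<lambda>n y. bM n y + \<delta> n y) sL L (\<lambda>n x. bL n x + p (n + 1) (\<delta> n (i n x))) p
       \<and> (\<forall>n. \<forall>y\<in>M n. i n (p n y) = y)"
proof -
  interpret perturbed_retract sL L bL sM M bM i p \<delta>
    using cL cM qi qp ip \<delta>lin sq unfolding quasi_iso_def by unfold_locales blast+
  have "\<forall>n. kernel_acyclic L DL i n"
    using quasi_iso_kernel_acyclic[OF cL cM qi p_map ip] kernel_acyclic_DL by blast
  then have "quasi_iso sL L DL sM M DM i \<and> quasi_iso sM M DM sL L DL p"
    using retract_quasi_iso[OF cochain_complex_DL cochain_complex_DM cochain_map_i_DL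
        cochain_map_p_DM ip] by blast
  moreover have "DL = (\<lambda>n x. bL n x + p (n + 1) (\<delta> n (i n x)))" "DM = (\<lambda>n y. bM n y + \<delta> n y)"
    by (simp_all add: fun_eq_iff DL_def DM_def)
  ultimately show ?thesis using cochain_complex_DL ip by simp
qed

end
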